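(* Let $(m_{1,t},m_{2,t})$, $m_{a,t}=\sum_{i=0}^nm_{a,i}t^i$, be a deformation of order $n\ge1$ of a compatible Leibniz algebra $(\mathfrak g,m_1,m_2)$. Define $\mathrm{O}^n=(\mathrm{O}^n_{m_1},\mathrm{O}^n_{m_1,m_2},\mathrm{O}^n_{m_2})\in C^3_{com}(\mathfrak g,\mathfrak g)$ by $$\mathrm{O}^n_{m_1}=\sum_{\substack{i+j=n+1\\ i,j\ge1}}A(m_{1,i},m_{1,j}),\quad \mathrm{O}^n_{m_2}=\sum_{\substack{i+j=n+1\\ i,j\ge1}}A(m_{2,i},m_{2,j}),\quad \mathrm{O}^n_{m_1,m_2}=\sum_{\substack{i+j=n+1\\ i,j\ge1}}\big(A(m_{1,i},m_{2,j})+A(m_{2,j},m_{1,i})\big).$$ Then the deformation extends to a deformation of order $n+1$ (i.e. there exist bilinear $m_{1,n+1},m_{2,n+1}$ such that $(m_{1,t}+m_{1,n+1}t^{n+1},\,m_{2,t}+m_{2,n+1}t^{n+1})$ is a deformation of order $n+1$) if and only if $\mathrm{O}^n$ is a coboundary, i.e. $\mathrm{O}^n\in\delta_c\big(C^2_{com}(\mathfrak g,\mathfrak g)\big)$ (equivalently, the cohomology class of $\mathrm{O}^n$ vanishes).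
   Context: (Right) Leibniz algebra: bilinear $m$ with $m(x,m(y,z))=m(m(x,y),z)-m(m(x,z),y)$. For bilinear $\alpha,\beta$ on $\mathfrak g$: $A(\alpha,\beta)(x,y,z)=\alpha(x,\beta(y,z))-\alpha(\beta(x,y),z)+\alpha(\beta(x,z),y)$. Compatible Leibniz algebra $(\mathfrak g,m_1,m_2)$: $A(m_1,m_1)=A(m_2,m_2)=0$, $A(m_1,m_2)+A(m_2,m_1)=0$. A deformation of order $n$: bilinear maps $m_{a,i}$ ($a=1,2$, $0\le i\le n$) on $\mathfrak g$ with $m_{a,0}=m_a$ such that for every $0\le N\le n$: $\sum_{i+j=N}A(m_{1,i},m_{1,j})=0$, $\sum_{i+j=N}A(m_{2,i},m_{2,j})=0$, $\sum_{i+j=N}(A(m_{1,i},m_{2,j})+A(m_{2,i},m_{1,j}))=0$ (indices in $\{0,\dots,n\}$); i.e. the defining identities of a compatible Leibniz algebra hold for $m_{a,t}=\sum_{i=0}^nm_{a,i}t^i$ modulo $t^{n+1}$. $\delta_a$: Leibniz coboundary of $(\mathfrak g,m_a)$ with coefficients in itself, $\delta_af(x_1,\dots,x_{k+1})=m_a(x_1,f(x_2,\dots,x_{k+1}))+\sum_{i=2}^{k+1}(-1)^im_a(f(x_1,\dots,\hat x_i,\dots,x_{k+1}),x_i)+\sum_{1\le i<j\le k+1}(-1)^{j+1}f(x_1,\dots,x_{i-1},m_a(x_i,x_j),x_{i+1},\dots,\hat x_j,\dots,x_{k+1})$. For $k\ge1$, $C^k_{com}(\mathfrak g,\mathfrak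 g)=\mathrm{Hom}(\mathfrak g^{\otimes k},\mathfrak g)^{\oplus k}$ and $\delta_c(h_1,\dots,h_k)=(\delta_1h_1,\delta_1h_2+\delta_2h_1,\dots,\delta_1h_k+\delta_2h_{k-1},\delta_2h_k)$; thus $\delta_c(f_1,f_2)=(\delta_1f_1,\delta_1f_2+\delta_2f_1,\delta_2f_2)$. *)

theory Defs
  imports Main "HOL.Vector_Spaces"
begin

text \<open>The underlying vector space g over a field 'k is the carrier type 'v with scalar
multiplication scale, assumed to satisfy the axioms of the locale vector_space.\<close>

definition bilinear_map :: "('k::field \<Rightarrow> 'v::ab_group_add \<Rightarrow> 'v) \<Rightarrow> ('v \<Rightarrow> 'v \<Rightarrow> 'v) \<Rightarrow> bool" where
  "bilinear_map scale m \<longleftrightarrow>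
     (\<forall>x. Vector_Spaces.linear scale scale (m x)) \<and>
     (\<forall>y. Vector_Spaces.linear scale scale (\<lambda>x. m x y))"

definition A_op :: "('v::ab_group_add \<Rightarrow> 'v \<Rightarrow> 'v) \<Rightarrow> ('v \<Rightarrow> 'v \<Rightarrow> 'v) \<Rightarrow> 'v \<Rightarrow> 'v \<Rightarrow> 'v \<Rightarrow> 'v" where
  "A_op \<alpha> \<beta> x y z = \<alpha> x (\<beta> y z) - \<alpha> (\<beta> x y) z + \<alpha> (\<beta> x z) y"

text \<open>Deformation of order n: m1 i, m2 i for i \<le> n (values for i > n are ignored),
  with m_{a,0} = m_a the underlying compatible Leibniz structure.\<close>
definition is_deformation ::
  "('k::field \<Rightarrow> 'v::ab_group_add \<Rightarrow> 'v) \<Rightarrow> nat \<Rightarrow> (nat \<Rightarrow> 'v \<Rightarrow> 'v \<Rightarrow> 'v) \<Rightarrow> (nat \<Rightarrow> 'v \<Rightarrow> 'v \<Rightarrow> 'v) \<Rightarrow> bool" where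
  "is_deformation scale n m1 m2 \<longleftrightarrow>
     (\<forall>i\<le>n. bilinear_map scale (m1 i) \<and> bilinear_map scale (m2 i)) \<and>
     (\<forall>N\<le>n. \<forall>x y z.
        (\<Sum>i\<le>N. A_op (m1 i) (m1 (N - i)) x y z) = 0 \<and>
        (\<Sum>i\<le>N. A_op (m2 i) (m2 (N - i)) x y z) = 0 \<and>
        (\<Sum>i\<le>N. A_op (m1 i) (m2 (N - i)) x y z + A_op (m2 i) (m1 (N - i)) x y z) = 0)"

text \<open>Leibniz coboundary of (g,m) with coefficients in itself, on 2-cochains (k = 2),
  i.e. the general formula written out for k = 2:
  delta f(x1,x2,x3) = m(x1,f(x2,x3)) + m(f(x1,x3),x2) - m(f(x1,x2),x3)
     - f(m(x1,x2),x3) + f(m(x1,x3),x2) + f(x1,m(x2,x3)).\<close>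
definition leib_delta2 :: "('v::ab_group_add \<Rightarrow> 'v \<Rightarrow> 'v) \<Rightarrow> ('v \<Rightarrow> 'v \<Rightarrow> 'v) \<Rightarrow> 'v \<Rightarrow> 'v \<Rightarrow> 'v \<Rightarrow> 'v" where
  "leib_delta2 m f x1 x2 x3 =
     m x1 (f x2 x3) + m (f x1 x3) x2 - m (f x1 x2) x3
     - f (m x1 x2) x3 + f (m x1 x3) x2 + f x1 (m x2 x3)"

definition obs_single :: "nat \<Rightarrow> (nat \<Rightarrow> 'v::ab_group_add \<Rightarrow> 'v \<Rightarrow> 'v) \<Rightarrow> 'v \<Rightarrow> 'v \<Rightarrow> 'v \<Rightarrow> 'v" where
  "obs_single n m x y z = (\<Sum>i\<in>{1..n}. A_op (m i) (m (n + 1 - i)) x y z)"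

definition obs_mixed :: "nat \<Rightarrow> (nat \<Rightarrow> 'v::ab_group_add \<Rightarrow> 'v \<Rightarrow> 'v) \<Rightarrow> (nat \<Rightarrow> 'v \<Rightarrow> 'v \<Rightarrow> 'v) \<Rightarrow> 'v \<Rightarrow> 'v \<Rightarrow> 'v \<Rightarrow> 'v" where
  "obs_mixed n m1 m2 x y z =
     (\<Sum>i\<in>{1..n}. A_op (m1 i) (m2 (n + 1 - i)) x y z + A_op (m2 (n + 1 - i)) (m1 i) x y z)"

text \<open>O^n lies in the image of delta_c on C^2_com = Hom(g\<otimes>g,g)^2:
  delta_c(f1,f2) = (delta_1 f1, delta_1 f2 + delta_2 f1, delta_2 f2).\<close>
definition obstruction_is_coboundary ::
  "('k::field \<Rightarrow> 'v::ab_group_add \<Rightarrow> 'v) \<Rightarrow> nat \<Rightarrow> (nat \<Rightarrow> 'v \<Rightarrow> 'v \<Rightarrow> 'v) \<Rightarrow> (nat \<Rightarrow> 'v \<Rightarrow> 'v \<Rightarrow> 'v) \<Rightarrow> bool" where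
  "obstruction_is_coboundary scale n m1 m2 \<longleftrightarrow>
     (\<exists>f1 f2. bilinear_map scale f1 \<and> bilinear_map scale f2 \<and>
        (\<forall>x y z.
           leib_delta2 (m1 0) f1 x y z = obs_single n m1 x y z \<and>
           leib_delta2 (m1 0) f2 x y z + leib_delta2 (m2 0) f1 x y z = obs_mixed n m1 m2 x y z \<and>
           leib_delta2 (m2 0) f2 x y z = obs_single n m2 x y z))"

end

theory Submission
  imports Defs
begin

text \<open>Adjoining \<open>p, q\<close> as the coefficients of \<open>t\<^sup>n\<^sup>+\<^sup>1\<close> leaves the equations of orders
  \<open>\<le> n\<close> untouched. In the three equations of order \<open>n + 1\<close> the new maps occur only in the
  terms \<open>i = 0\<close> and \<open>i = n + 1\<close>, which pair up to \<open>A(m\<^sub>a, p) + A(p, m\<^sub>a) = \<delta>\<^sub>a p\<close> (and to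
  \<open>\<delta>\<^sub>1 q + \<delta>\<^sub>2 p\<close> in the mixed equation), while the remaining terms are exactly \<open>O\<^sup>n\<close>.
  Hence \<open>(p, q)\<close> extends the deformation iff \<open>\<delta>\<^sub>c(p, q) = -O\<^sup>n\<close>, i.e. iff \<open>-(p, q)\<close> is a
  primitive of \<open>O\<^sup>n\<close>.\<close>

lemma module_linear_neg: "Vector_Spaces.linear s s' f \<Longrightarrow> f (- x) = - f x"
  by (rule module_hom.neg[OF module_hom_linearI])

lemma module_linear_compose_neg:
  "Vector_Spaces.linear s s' f \<Longrightarrow> Vector_Spaces.linear s s' (\<lambda>x. - f x)"
  by (metis linear_iff_module_hom module_pair.module_hom_neg module_hom_def module_pair_def)

lemma bilinear_map_minus_left: "bilinear_map s m \<Longrightarrow> m (- x) y = - m x y"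
  unfolding bilinear_map_def using module_linear_neg[of s s "\<lambda>x. m x y"] by blast

lemma bilinear_map_minus_right: "bilinear_map s m \<Longrightarrow> m x (- y) = - m x y"
  unfolding bilinear_map_def using module_linear_neg[of s s "m x"] by blast

lemma bilinear_map_uminus: "bilinear_map s f \<Longrightarrow> bilinear_map s (\<lambda>x y. - f x y)"
  unfolding bilinear_map_def by (auto intro: module_linear_compose_neg)

lemma leib_delta2_uminus:
  assumes "bilinear_map s m"
  shows "leib_delta2 m (\<lambda>x y. - f x y) x1 x2 x3 = - leib_delta2 m f x1 x2 x3"
  unfolding leib_delta2_def
  by (simp add: bilinear_map_minus_left[OF assms] bilinear_map_minus_right[OF assms] algebra_simps)

lemma leib_delta2_eq_A_op: "leib_delta2 m f x y z = A_op m f x y z + A_op f m x y z"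
  unfolding leib_delta2_def A_op_def by (simp add: algebra_simps)

lemma sum_atMost_Suc_ends:
  fixes g :: "nat \<Rightarrow> 'a::comm_monoid_add"
  shows "(\<Sum>i\<le>Suc n. g i) = g 0 + g (Suc n) + (\<Sum>i\<in>{1..n}. g i)"
  by (simp add: atMost_atLeast0 sum.atLeast_Suc_atMost add_ac)

lemma sum_A_op_fun_upd_Suc:
  "(\<Sum>i\<le>Suc n. A_op ((m(Suc n := p)) i) ((m(Suc n := p)) (Suc n - i)) x y z)
     = leib_delta2 (m 0) p x y z + obs_single n m x y z"
proof -
  have "(\<Sum>i\<in>{1..n}. A_op ((m(Suc n := p)) i) ((m(Suc n := p)) (Suc n - i)) x y z)
      = obs_single n m x y z"
    unfolding obs_single_def by (intro sum.cong) auto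
  then show ?thesis unfolding sum_atMost_Suc_ends by (simp add: leib_delta2_eq_A_op)
qed

lemma sum_A_op_mixed_fun_upd_Suc:
  "(\<Sum>i\<le>Suc n. A_op ((m1(Suc n := p)) i) ((m2(Suc n := q)) (Suc n - i)) x y z
        + A_op ((m2(Suc n := q)) i) ((m1(Suc n := p)) (Suc n - i)) x y z)
     = leib_delta2 (m1 0) q x y z + leib_delta2 (m2 0) p x y z + obs_mixed n m1 m2 x y z"
proof -
  have reflect: "(\<Sum>i\<in>{1..n}. A_op (m2 i) (m1 (n + 1 - i)) x y z)
      = (\<Sum>i\<in>{1..n}. A_op (m2 (n + 1 - i)) (m1 i) x y z)"
    by (subst sum.atLeastAtMost_rev) (intro sum.cong, auto)
  have "(\<Sum>i\<in>{1..n}. A_op ((m1(Suc n := p)) i) ((m2(Suc n := q)) (Suc n - i)) x y z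
        + A_op ((m2(Suc n := q)) i) ((m1(Suc n := p)) (Suc n - i)) x y z)
      = (\<Sum>i\<in>{1..n}. A_op (m1 i) (m2 (n + 1 - i)) x y z + A_op (m2 i) (m1 (n + 1 - i)) x y z)"
    by (intro sum.cong) auto
  also have "\<dots> = obs_mixed n m1 m2 x y z"
    unfolding obs_mixed_def sum.distrib reflect ..
  finally show ?thesis
    unfolding sum_atMost_Suc_ends by (simp add: leib_delta2_eq_A_op algebra_simps)
qed

lemma is_deformation_cong:
  fixes m1 m2 m1' m2' :: "nat \<Rightarrow> 'v::ab_group_add \<Rightarrow> 'v \<Rightarrow> 'v"
  assumes "\<And>i. i \<le> n \<Longrightarrow> m1 i = m1' i" and "\<And>i. i \<le> n \<Longrightarrow> m2 i = m2' i"
  shows "is_deformation scale n m1 m2 \<longleftrightarrow> is_deformation scale n m1' m2'"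
proof -
  have "(\<Sum>i\<le>N. F (m1 i) (m2 i) (m1 (N - i)) (m2 (N - i)))
      = (\<Sum>i\<le>N. F (m1' i) (m2' i) (m1' (N - i)) (m2' (N - i)))"
    if "N \<le> n" for N and F :: "_ \<Rightarrow> _ \<Rightarrow> _ \<Rightarrow> _ \<Rightarrow> 'v"
    using that assms by (intro sum.cong) auto
  then show ?thesis
    unfolding is_deformation_def using assms by auto
qed

lemma is_deformation_Suc_iff:
  "is_deformation scale (Suc n) m1 m2 \<longleftrightarrow>
     is_deformation scale n m1 m2 \<and>
     bilinear_map scale (m1 (Suc n)) \<and> bilinear_map scale (m2 (Suc n)) \<and>
     (\<forall>x y z.
        (\<Sum>i\<le>Suc n. A_op (m1 i) (m1 (Suc n - i)) x y z) = 0 \<and>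
        (\<Sum>i\<le>Suc n. A_op (m2 i) (m2 (Suc n - i)) x y z) = 0 \<and>
        (\<Sum>i\<le>Suc n. A_op (m1 i) (m2 (Suc n - i)) x y z + A_op (m2 i) (m1 (Suc n - i)) x y z) = 0)"
  unfolding is_deformation_def by (auto simp: le_Suc_eq)

definition extension_equations ::
  "nat \<Rightarrow> (nat \<Rightarrow> 'v::ab_group_add \<Rightarrow> 'v \<Rightarrow> 'v) \<Rightarrow> (nat \<Rightarrow> 'v \<Rightarrow> 'v \<Rightarrow> 'v)
     \<Rightarrow> ('v \<Rightarrow> 'v \<Rightarrow> 'v) \<Rightarrow> ('v \<Rightarrow> 'v \<Rightarrow> 'v) \<Rightarrow> bool" where
  "extension_equations n m1 m2 p q \<longleftrightarrow>
     (\<forall>x y z.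
        leib_delta2 (m1 0) p x y z + obs_single n m1 x y z = 0 \<and>
        leib_delta2 (m2 0) q x y z + obs_single n m2 x y z = 0 \<and>
        leib_delta2 (m1 0) q x y z + leib_delta2 (m2 0) p x y z + obs_mixed n m1 m2 x y z = 0)"

lemma is_deformation_extension_iff:
  assumes "is_deformation scale n m1 m2"
  shows "is_deformation scale (Suc n) (m1(Suc n := p)) (m2(Suc n := q)) \<longleftrightarrow>
     bilinear_map scale p \<and> bilinear_map scale q \<and> extension_equations n m1 m2 p q"
proof -
  have "is_deformation scale n (m1(Suc n := p)) (m2(Suc n := q))"
    using assms by (subst is_deformation_cong[of n _ m1 _ m2]) auto
  then show ?thesis
    unfolding is_deformation_Suc_iff extension_equations_def
      sum_A_op_fun_upd_Suc sum_A_op_mixed_fun_upd_Suc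
    by auto
qed

lemma obstruction_is_coboundary_iff_extension_equations:
  assumes "bilinear_map scale (m1 0)" and "bilinear_map scale (m2 0)"
  shows "obstruction_is_coboundary scale n m1 m2 \<longleftrightarrow>
     (\<exists>p q. bilinear_map scale p \<and> bilinear_map scale q \<and> extension_equations n m1 m2 p q)"
proof -
  have primitive_iff: "(leib_delta2 (m1 0) f1 x y z = obs_single n m1 x y z \<and>
        leib_delta2 (m1 0) f2 x y z + leib_delta2 (m2 0) f1 x y z = obs_mixed n m1 m2 x y z \<and>
        leib_delta2 (m2 0) f2 x y z = obs_single n m2 x y z) \<longleftrightarrow>
      (leib_delta2 (m1 0) (\<lambda>x y. - f1 x y) x y z + obs_single n m1 x y z = 0 \<and>
        leib_delta2 (m2 0) (\<lambda>x y. - f2 x y) x y z + obs_single n m2 x y z = 0 \<and>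
        leib_delta2 (m1 0) (\<lambda>x y. - f2 x y) x y z + leib_delta2 (m2 0) (\<lambda>x y. - f1 x y) x y z
          + obs_mixed n m1 m2 x y z = 0)" for f1 f2 x y z
    unfolding leib_delta2_uminus[OF assms(1)] leib_delta2_uminus[OF assms(2)]
    by (auto simp: algebra_simps)
  show ?thesis
  proof
    assume "obstruction_is_coboundary scale n m1 m2"
    then obtain f1 f2 where "bilinear_map scale f1" "bilinear_map scale f2"
      and "extension_equations n m1 m2 (\<lambda>x y. - f1 x y) (\<lambda>x y. - f2 x y)"
      unfolding obstruction_is_coboundary_def extension_equations_def primitive_iff by blast
    then show "\<exists>p q. bilinear_map scale p \<and> bilinear_map scale q \<and> extension_equations n m1 m2 p q"
      by (blast intro: bilinear_map_uminus)
  next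
    assume "\<exists>p q. bilinear_map scale p \<and> bilinear_map scale q \<and> extension_equations n m1 m2 p q"
    then obtain p q where pq: "bilinear_map scale p" "bilinear_map scale q"
      "extension_equations n m1 m2 p q" by blast
    show "obstruction_is_coboundary scale n m1 m2"
      unfolding obstruction_is_coboundary_def
      by (rule exI[of _ "\<lambda>x y. - p x y"], rule exI[of _ "\<lambda>x y. - q x y"])
        (use pq in \<open>simp add: primitive_iff extension_equations_def bilinear_map_uminus\<close>)
  qed
qed

theorem mainTheorem10:
  fixes scale :: "'k::field \<Rightarrow> 'v::ab_group_add \<Rightarrow> 'v"
    and n :: nat
    and m1 m2 :: "nat \<Rightarrow> 'v \<Rightarrow> 'v \<Rightarrow> 'v"
  assumes "vector_space scale"
    and "n \<ge> 1"
    and "is_deformation scale n m1 m2"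
  shows "(\<exists>p q. bilinear_map scale p \<and> bilinear_map scale q \<and>
            is_deformation scale (Suc n) (m1(Suc n := p)) (m2(Suc n := q)))
         \<longleftrightarrow> obstruction_is_coboundary scale n m1 m2"
proof -
  have "bilinear_map scale (m1 0)" and "bilinear_map scale (m2 0)"
    using assms(3) unfolding is_deformation_def by auto
  then show ?thesis
    using obstruction_is_coboundary_iff_extension_equations is_deformation_extension_iff[OF assms(3)]
    by blast
qed

end
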